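(* Let $U_1,\dots,U_{d-1}$ be iid uniform on $[0,1]$ and $q\ge1$. Then for every interval $[a,b]$ with $0\le a\le b$, $$\mathbf{P}\Big[\sum_{i=1}^{d-1}U_i^q\in[a,b]\Big]\le b^{(d-1)/q}-a^{(d-1)/q}.$$ *)

theory Defs
  imports "HOL-Probability.Probability"
begin

end

theory Submission
  imports Defs "HOL-Probability.Probability"
begin

text \<open>Write \<open>G t\<close> for the probability that \<open>S = \<Sum>\<^sub>i x\<^sub>i\<^sup>q\<close> is at most \<open>t\<close>, with the \<open>x\<^sub>i\<close>
  \<open>n\<close> independent uniform variables on \<open>[0,1]\<close>. Since \<open>S\<close> dominates every \<open>x\<^sub>i\<^sup>q\<close>, the event \<open>S \<le> t\<close> lies in the
  cube \<open>[0, t\<^sup>1\<^sup>/\<^sup>q]\<^sup>n\<close>, so \<open>G t \<le> t\<^sup>n\<^sup>/\<^sup>q\<close>. Scaling every coordinate by \<open>(s/t)\<^sup>1\<^sup>/\<^sup>q\<close> turns the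
  event \<open>S \<le> t\<close> into \<open>S \<le> s\<close> and multiplies volumes by \<open>(s/t)\<^sup>n\<^sup>/\<^sup>q\<close>, so \<open>G s \<ge> (s/t)\<^sup>n\<^sup>/\<^sup>q G t\<close>.
  Hence \<open>P[a \<le> S \<le> b] \<le> (1 - (a/b)\<^sup>n\<^sup>/\<^sup>q) G b \<le> b\<^sup>n\<^sup>/\<^sup>q - a\<^sup>n\<^sup>/\<^sup>q\<close>.\<close>

abbreviation uniform01 :: "real measure" where
  "uniform01 \<equiv> uniform_measure lborel {0..1}"

abbreviation uniform_cube :: "'i set \<Rightarrow> ('i \<Rightarrow> real) measure" where
  "uniform_cube I \<equiv> PiM I (\<lambda>_. uniform01)"

lemma prob_space_uniform01: "prob_space uniform01"
  by (rule prob_space_uniform_measure) auto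

lemma ennreal_divide_one [simp]: "x / 1 = (x :: ennreal)"
  by (simp add: divide_ennreal_def)

lemma emeasure_uniform01_atLeastAtMost:
  "0 \<le> c \<Longrightarrow> c \<le> 1 \<Longrightarrow> emeasure uniform01 {0..c} = ennreal c"
  by (simp add: Int_absorb2)

lemma prob_space_uniform_measure_uniform01:
  "0 < c \<Longrightarrow> c \<le> 1 \<Longrightarrow> prob_space (uniform_measure uniform01 {0..c})"
  by (rule prob_space_uniform_measure) (auto simp: emeasure_uniform01_atLeastAtMost)

lemma emeasure_lborel_mult_vimage:
  fixes c :: real
  assumes "c > 0" and E: "E \<in> sets borel"
  shows "emeasure lborel ((*) c -` E) = ennreal (1/c) * emeasure lborel E"
proof -
  have "emeasure lborel ((*) c -` E) = emeasure (distr lborel borel ((*) c)) E"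
    using E by (subst emeasure_distr) auto
  also have "\<dots> = emeasure (density lborel (\<lambda>_. ennreal (inverse \<bar>c\<bar>))) E"
    using assms by (subst lborel_distr_mult) auto
  also have "\<dots> = ennreal (1/c) * emeasure lborel E"
    using E assms by (subst emeasure_density)
      (auto simp: nn_integral_cmult_indicator mult.commute[of "indicator E _"] inverse_eq_divide)
  finally show ?thesis .
qed

lemma distr_uniform01_mult:
  fixes c :: real
  assumes c: "0 < c" "c \<le> 1"
  shows "distr uniform01 uniform01 ((*) c) = uniform_measure uniform01 {0..c}"
proof (rule measure_eqI)
  fix A assume "A \<in> sets (distr uniform01 uniform01 ((*) c))"
  then have A: "A \<in> sets borel" by simp
  have "(*) c -` A \<in> sets borel"
    using A by (rule measurable_sets_borel[rotated]) simp
  then have "emeasure (distr uniform01 uniform01 ((*) c)) A = emeasure lborel ({0..1} \<inter> (*) c -` A)"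
    using A by (subst emeasure_distr) auto
  also have "{0..1} \<inter> (*) c -` A = (*) c -` ({0..c} \<inter> A)"
    using c by (auto simp: field_simps mult_le_cancel_left1 zero_le_mult_iff)
  also have "emeasure lborel \<dots> = ennreal (1/c) * emeasure lborel ({0..c} \<inter> A)"
    using c A by (intro emeasure_lborel_mult_vimage) auto
  also have "\<dots> = emeasure (uniform_measure uniform01 {0..c}) A"
  proof -
    have "{0..1} \<inter> ({0..c} \<inter> A) = {0..c} \<inter> A"
      using c by auto
    then show ?thesis
      using c A by (simp add: emeasure_uniform01_atLeastAtMost divide_ennreal_def
          ennreal_inverse_positive mult.commute inverse_ennreal inverse_eq_divide)
  qed
  finally show "emeasure (distr uniform01 uniform01 ((*) c)) A = emeasure (uniform_measure uniform01 {0..c}) A" .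
qed simp

text \<open>\<open>P[a \<le> S]\<close> is the complement of a strict sublevel set, so the homogeneity bound is
  applied at every \<open>t < a\<close> and the estimate at \<open>a\<close> is obtained in the limit \<open>t \<rightarrow> a\<^sup>-\<close>.\<close>

lemma (in finite_measure) measure_atLeastAtMost_le_powr_diff:
  fixes S :: "'a \<Rightarrow> real"
  assumes S[measurable]: "S \<in> borel_measurable M" and p: "p > 0" and ab: "0 \<le> a" "a \<le> b"
    and le_powr: "measure M {x \<in> space M. S x \<le> b} \<le> b powr p"
    and homogeneous: "\<And>t. 0 < t \<Longrightarrow> t < a \<Longrightarrow>
      (t / b) powr p * measure M {x \<in> space M. S x \<le> b} \<le> measure M {x \<in> space M. S x \<le> t}"
  shows "measure M {x \<in> space M. S x \<in> {a..b}} \<le> b powr p - a powr p"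
proof (cases "a = 0")
  case True
  have "measure M {x \<in> space M. S x \<in> {a..b}} \<le> measure M {x \<in> space M. S x \<le> b}"
    by (intro finite_measure_mono) auto
  then show ?thesis
    using le_powr True by simp
next
  case False
  then have a: "a > 0"
    using ab by simp
  let ?G = "\<lambda>t. measure M {x \<in> space M. S x \<le> t}"
  have bound: "measure M {x \<in> space M. S x \<in> {a..b}} \<le> b powr p - t powr p" if t: "0 < t" "t < a" for t
  proof -
    have "(t / b) powr p \<le> 1 powr p"
      using t ab p by (intro powr_mono2) auto
    then have t_b: "0 \<le> 1 - (t / b) powr p"
      by simp
    have "measure M {x \<in> space M. S x \<in> {a..b}}
        \<le> measure M ({x \<in> space M. S x \<le> b} - {x \<in> space M. S x \<le> t})"
      using t by (intro finite_measure_mono) auto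
    also have "\<dots> = ?G b - ?G t"
      using t ab by (intro finite_measure_Diff) auto
    also have "\<dots> \<le> (1 - (t / b) powr p) * ?G b"
      using homogeneous[OF t] by (simp add: algebra_simps)
    also have "\<dots> \<le> (1 - (t / b) powr p) * b powr p"
      using le_powr t_b by (rule mult_left_mono)
    also have "\<dots> = b powr p - t powr p"
      using t ab by (simp add: powr_divide algebra_simps)
    finally show ?thesis .
  qed
  have "((\<lambda>t. b powr p - t powr p) \<longlongrightarrow> b powr p - a powr p) (at_left a)"
    using a by (intro tendsto_intros) auto
  then show ?thesis
  proof (rule tendsto_lowerbound)
    show "\<forall>\<^sub>F t in at_left a. measure M {x \<in> space M. S x \<in> {a..b}} \<le> b powr p - t powr p"
      using eventually_at_left_real[OF a] by eventually_elim (rule bound; simp)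
  qed simp
qed

context
  fixes I :: "'i set"
  assumes finite_I: "finite I"
begin

interpretation uniform_cube: product_prob_space "\<lambda>_. uniform01" I
  by (intro product_prob_spaceI prob_space_uniform01)

lemma prob_space_uniform_cube: "prob_space (uniform_cube I)"
  by (intro prob_space_PiM prob_space_uniform01)

lemma box_in_sets_uniform_cube: "PiE I A \<in> sets (uniform_cube I)" if "\<And>i. i \<in> I \<Longrightarrow> A i \<in> sets borel"
  using finite_I that by (intro sets_PiM_I_finite) auto

lemma emeasure_uniform_cube_box:
  "0 \<le> c \<Longrightarrow> c \<le> 1 \<Longrightarrow> emeasure (uniform_cube I) (PiE I (\<lambda>_. {0..c})) = ennreal (c ^ card I)"
  using finite_I by (subst uniform_cube.emeasure_PiM)
    (auto simp: emeasure_uniform01_atLeastAtMost ennreal_power)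

lemma measure_uniform_cube_box:
  "0 \<le> c \<Longrightarrow> c \<le> 1 \<Longrightarrow> measure (uniform_cube I) (PiE I (\<lambda>_. {0..c})) = c ^ card I"
  by (simp add: measure_def emeasure_uniform_cube_box)

lemma AE_uniform_cube: "AE x in uniform_cube I. x \<in> PiE I (\<lambda>_. {0..1})"
  by (rule prob_space.AE_prob_1[OF prob_space_uniform_cube])
    (simp add: measure_uniform_cube_box box_in_sets_uniform_cube)

lemma measure_uniform_cube_Int_cube:
  "E \<in> sets (uniform_cube I) \<Longrightarrow> measure (uniform_cube I) (E \<inter> PiE I (\<lambda>_. {0..1})) = measure (uniform_cube I) E"
  by (rule measure_eq_AE) (use AE_uniform_cube box_in_sets_uniform_cube in auto)

lemma uniform_measure_uniform_cube_box:
  assumes c: "0 < c" "c \<le> 1"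
  shows "uniform_measure (uniform_cube I) (PiE I (\<lambda>_. {0..c}))
       = PiM I (\<lambda>_. uniform_measure uniform01 {0..c})"
proof -
  interpret box: product_prob_space "\<lambda>_. uniform_measure uniform01 {0..c}" I
    by (intro product_prob_spaceI prob_space_uniform_measure_uniform01 c)
  show ?thesis
  proof (rule box.PiM_eqI[OF finite_I])
    fix A assume A: "\<And>i. i \<in> I \<Longrightarrow> A i \<in> sets (uniform_measure uniform01 {0..c})"
    have "inverse (ennreal (c ^ card I)) = (\<Prod>i\<in>I. inverse (ennreal c))"
      using c by (simp add: ennreal_power[symmetric] ennreal_inverse_power prod_constant del: ennreal_power)
    then have "emeasure (uniform_measure (uniform_cube I) (PiE I (\<lambda>_. {0..c}))) (PiE I A)
        = (\<Prod>i\<in>I. emeasure uniform01 ({0..c} \<inter> A i) / ennreal c)"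
      using A c by (simp add: PiE_Int box_in_sets_uniform_cube emeasure_uniform_cube_box
          uniform_cube.emeasure_PiM[OF finite_I] divide_ennreal_def prod.distrib)
    also have "\<dots> = (\<Prod>i\<in>I. emeasure (uniform_measure uniform01 {0..c}) (A i))"
      using A c by (intro prod.cong) (auto simp: emeasure_uniform01_atLeastAtMost)
    finally show "emeasure (uniform_measure (uniform_cube I) (PiE I (\<lambda>_. {0..c}))) (PiE I A)
        = (\<Prod>i\<in>I. emeasure (uniform_measure uniform01 {0..c}) (A i))" .
  qed (simp cong: sets_PiM_cong)
qed

text \<open>Scaling all coordinates by \<open>c\<close> maps the uniform cube onto the uniform measure on the
  subcube \<open>[0, c]\<^sup>I\<close>, which has volume \<open>c ^ card I\<close>.\<close>

lemma measure_uniform_cube_Int_box: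
  assumes c: "0 < c" "c \<le> 1" and E: "E \<in> sets (uniform_cube I)"
  shows "measure (uniform_cube I) (E \<inter> PiE I (\<lambda>_. {0..c}))
       = c ^ card I * measure (uniform_cube I) ((\<lambda>x. \<lambda>i\<in>I. c * x i) -` E \<inter> space (uniform_cube I))"
proof -
  let ?B = "PiE I (\<lambda>_. {0..c})"
  have scale_eq: "compose I ((*) c) = (\<lambda>x. \<lambda>i\<in>I. c * x i)"
    by (auto simp: compose_def fun_eq_iff)
  have scale_measurable: "compose I ((*) c) \<in> uniform_cube I \<rightarrow>\<^sub>M uniform_cube I"
    unfolding compose_def by (intro measurable_restrict) simp
  have "distr (uniform_cube I) (uniform_cube I) (compose I ((*) c))
      = PiM I (\<lambda>_. distr uniform01 uniform01 ((*) c))"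
    by (rule distr_PiM_finite_prob_space[OF finite_I]) (auto intro: product_prob_spaceI prob_space_uniform01)
  also have "\<dots> = uniform_measure (uniform_cube I) ?B"
    using c by (simp add: distr_uniform01_mult uniform_measure_uniform_cube_box)
  finally have "measure (uniform_cube I) (compose I ((*) c) -` E \<inter> space (uniform_cube I))
      = measure (uniform_measure (uniform_cube I) ?B) E"
    using E scale_measurable by (metis measure_distr)
  also have "\<dots> = measure (uniform_cube I) (?B \<inter> E) / c ^ card I"
    using c E by (simp add: measure_uniform_measure measure_uniform_cube_box emeasure_uniform_cube_box
        box_in_sets_uniform_cube)
  finally show ?thesis
    using c by (simp add: scale_eq Int_commute field_simps)
qed

lemma measure_uniform_cube_sum_powr_le:
  assumes I: "I \<noteq> {}" and q: "q > 0" and t: "t \<ge> 0"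
  shows "measure (uniform_cube I) {x \<in> space (uniform_cube I). (\<Sum>i\<in>I. x i powr q) \<le> t}
       \<le> t powr (card I / q)"
    (is "measure _ ?F \<le> _")
proof (cases "t \<ge> 1")
  case True
  then have "1 \<le> t powr (card I / q)"
    using q by (simp add: ge_one_powr_ge_zero)
  then show ?thesis
    using prob_space.prob_le_1[OF prob_space_uniform_cube, of ?F] by linarith
next
  case False
  define c where "c = t powr (1 / q)"
  have c: "0 \<le> c" "c \<le> 1"
    using False t q powr_mono2[of "1 / q" t 1] by (auto simp: c_def)
  have "?F \<inter> PiE I (\<lambda>_. {0..1}) \<subseteq> PiE I (\<lambda>_. {0..c})"
  proof
    fix x assume x: "x \<in> ?F \<inter> PiE I (\<lambda>_. {0..1})"
    have "x i \<le> c" if i: "i \<in> I" for i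
    proof -
      have "x i powr q \<le> (\<Sum>i\<in>I. x i powr q)"
        using finite_I i by (intro member_le_sum) auto
      then have "(x i powr q) powr (1 / q) \<le> t powr (1 / q)"
        using x q by (intro powr_mono2) auto
      then show ?thesis
        using x i q by (auto simp: powr_powr c_def)
    qed
    then show "x \<in> PiE I (\<lambda>_. {0..c})"
      using x by auto
  qed
  then have "measure (uniform_cube I) (?F \<inter> PiE I (\<lambda>_. {0..1})) \<le> measure (uniform_cube I) (PiE I (\<lambda>_. {0..c}))"
    by (intro finite_measure.finite_measure_mono prob_space.finite_measure prob_space_uniform_cube
        box_in_sets_uniform_cube) auto
  moreover have "c ^ card I = t powr (card I / q)"
    using I finite_I t q by (cases "t = 0") (auto simp: c_def powr_realpow[symmetric] powr_powr)
  ultimately show ?thesis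
    by (simp add: measure_uniform_cube_Int_cube measure_uniform_cube_box c)
qed

lemma measure_uniform_cube_sum_powr_homogeneous:
  assumes q: "q > 0" and st: "0 < s" "s \<le> t"
  shows "(s / t) powr (card I / q)
           * measure (uniform_cube I) {x \<in> space (uniform_cube I). (\<Sum>i\<in>I. x i powr q) \<le> t}
       \<le> measure (uniform_cube I) {x \<in> space (uniform_cube I). (\<Sum>i\<in>I. x i powr q) \<le> s}"
proof -
  define F where "F r = {x \<in> space (uniform_cube I). (\<Sum>i\<in>I. x i powr q) \<le> r}" for r
  have F_sets: "F r \<in> sets (uniform_cube I)" for r
    unfolding F_def by measurable
  define l where "l = (s / t) powr (1 / q)"
  have l: "0 < l" "l \<le> 1"
    using st q powr_mono2[of "1 / q" "s / t" 1] by (auto simp: l_def)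
  have l_pow: "l ^ card I = (s / t) powr (card I / q)"
    using l st q by (simp add: powr_realpow[symmetric] l_def powr_powr)
  define T where "T = (\<lambda>x :: 'i \<Rightarrow> real. \<lambda>i\<in>I. l * x i)"
  have T_sum: "(\<Sum>i\<in>I. T x i powr q) = s / t * (\<Sum>i\<in>I. x i powr q)" if "x \<in> PiE I (\<lambda>_. {0..1})" for x
    using that l st q by (auto simp: T_def powr_mult powr_powr l_def sum_distrib_left intro!: sum.cong)
  have T_F: "T x \<in> F s \<longleftrightarrow> x \<in> F t" if x: "x \<in> PiE I (\<lambda>_. {0..1})" for x
  proof -
    have "s / t * (\<Sum>i\<in>I. x i powr q) \<le> s \<longleftrightarrow> (\<Sum>i\<in>I. x i powr q) \<le> t"
      using st by (simp add: field_simps)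
    moreover have "T x \<in> space (uniform_cube I)" "x \<in> space (uniform_cube I)"
      using x by (auto simp: T_def space_PiM)
    ultimately show ?thesis
      by (simp add: F_def T_sum[OF x])
  qed
  have "T -` F s \<inter> space (uniform_cube I) \<inter> PiE I (\<lambda>_. {0..1}) = F t \<inter> PiE I (\<lambda>_. {0..1})"
    using T_F by (auto simp: F_def)
  moreover have "T -` F s \<inter> space (uniform_cube I) \<in> sets (uniform_cube I)"
    using F_sets unfolding T_def by (intro measurable_sets[OF measurable_restrict]) auto
  ultimately have "measure (uniform_cube I) (F t) = measure (uniform_cube I) (T -` F s \<inter> space (uniform_cube I))"
    by (metis F_sets measure_uniform_cube_Int_cube)
  then have "(s / t) powr (card I / q) * measure (uniform_cube I) (F t) = measure (uniform_cube I) (F s \<inter> PiE I (\<lambda>_. {0..l}))"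
    using measure_uniform_cube_Int_box[OF l F_sets] by (simp add: l_pow T_def)
  also have "\<dots> \<le> measure (uniform_cube I) (F s)"
    by (intro finite_measure.finite_measure_mono prob_space.finite_measure prob_space_uniform_cube F_sets) auto
  finally show ?thesis
    by (simp add: F_def)
qed

lemma measure_uniform_cube_sum_powr_atLeastAtMost:
  assumes I: "I \<noteq> {}" and q: "q > 0" and ab: "0 \<le> a" "a \<le> b"
  shows "measure (uniform_cube I) {x \<in> space (uniform_cube I). (\<Sum>i\<in>I. x i powr q) \<in> {a..b}}
       \<le> b powr (card I / q) - a powr (card I / q)"
proof (rule finite_measure.measure_atLeastAtMost_le_powr_diff)
  show "finite_measure (uniform_cube I)"
    by (intro prob_space.finite_measure prob_space_uniform_cube)
  show "real (card I) / q > 0"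
    using I finite_I q by (simp add: card_gt_0_iff)
qed (use ab in \<open>auto intro!: measure_uniform_cube_sum_powr_le measure_uniform_cube_sum_powr_homogeneous I q\<close>)

end

lemma (in prob_space) prob_indep_uniform01_vimage:
  assumes I: "I \<noteq> {}" and indep: "indep_vars (\<lambda>_. borel) U I"
    and uniform: "\<And>i. i \<in> I \<Longrightarrow> distr M lborel (U i) = uniform01"
    and E: "E \<in> sets (uniform_cube I)"
  shows "prob ((\<lambda>\<omega>. \<lambda>i\<in>I. U i \<omega>) -` E \<inter> space M) = measure (uniform_cube I) E"
proof -
  have rv: "random_variable borel (U i)" if "i \<in> I" for i
    using indep that by (auto simp: indep_vars_def)
  have "distr M (PiM I (\<lambda>_. borel)) (\<lambda>\<omega>. \<lambda>i\<in>I. U i \<omega>) = PiM I (\<lambda>i. distr M borel (U i))"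
    using indep_vars_iff_distr_eq_PiM'[OF I rv] indep by simp
  also have "\<dots> = uniform_cube I"
    using uniform by (intro PiM_cong) (simp_all cong: distr_cong)
  finally have "measure (uniform_cube I) E
      = measure (distr M (PiM I (\<lambda>_. borel)) (\<lambda>\<omega>. \<lambda>i\<in>I. U i \<omega>)) E"
    by simp
  also have "\<dots> = prob ((\<lambda>\<omega>. \<lambda>i\<in>I. U i \<omega>) -` E \<inter> space M)"
    using E rv by (intro measure_distr measurable_restrict) (auto cong: sets_PiM_cong)
  finally show ?thesis ..
qed

theorem lemma5p4:
  fixes M :: "'a measure" and U :: "nat \<Rightarrow> 'a \<Rightarrow> real"
    and d :: nat and q a b :: real
  assumes "prob_space M"
    and "d \<ge> 2"
    and "prob_space.indep_vars M (\<lambda>_. borel) U {1..d-1}"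
    and "\<And>i. i \<in> {1..d-1} \<Longrightarrow> distr M lborel (U i) = uniform_measure lborel {0..1}"
    and "q \<ge> 1"
    and "0 \<le> a" and "a \<le> b"
  shows "measure M {\<omega> \<in> space M. (\<Sum>i=1..d-1. U i \<omega> powr q) \<in> {a..b}}
           \<le> b powr (real (d-1) / q) - a powr (real (d-1) / q)"
proof -
  interpret prob_space M by fact
  let ?I = "{1..d-1}"
  let ?E = "{x \<in> space (uniform_cube ?I). (\<Sum>i\<in>?I. x i powr q) \<in> {a..b}}"
  have I: "finite ?I" "?I \<noteq> {}" "card ?I = d - 1"
    using assms(2) by auto
  have E_sets: "?E \<in> sets (uniform_cube ?I)"
    by measurable
  have "{\<omega> \<in> space M. (\<Sum>i=1..d-1. U i \<omega> powr q) \<in> {a..b}} = (\<lambda>\<omega>. \<lambda>i\<in>?I. U i \<omega>) -` ?E \<inter> space M"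
    by (auto simp: space_PiM)
  also have "prob \<dots> = measure (uniform_cube ?I) ?E"
    by (rule prob_indep_uniform01_vimage[OF I(2) assms(3) _ E_sets]) (simp add: assms(4))
  also have "\<dots> \<le> b powr (real (d-1) / q) - a powr (real (d-1) / q)"
    using measure_uniform_cube_sum_powr_atLeastAtMost[OF I(1,2), of q a b] assms(5-7) I(3) by simp
  finally show ?thesis .
qed

end
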